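(* The consecutive patterns $\underline{0102}$ and $\underline{0112}$ are reciprocal: for every $n\ge 1$ and all $S,T\subseteq[n]$, $$|\{\epsilon\in I_n:\operatorname{Em}(\underline{0102},\epsilon)=S,\ \operatorname{Em}(\underline{0112},\epsilon)=T\}|=|\{\epsilon\in I_n:\operatorname{Em}(\underline{0102},\epsilon)=T,\ \operatorname{Em}(\underline{0112},\epsilon)=S\}|.$$
   Context: An inversion sequence of length $n$ is an integer sequence $\epsilon=\epsilon_1\cdots\epsilon_n$ with $0\le\epsilon_i<i$ for all $i$; $I_n$ denotes the set of them. The reduction of an integer word is obtained by replacing every occurrence of its $k$-th smallest distinct value by $k-1$. A consecutive pattern $p=\underline{p_1\cdots p_r}$ occurs in a sequence $\epsilon$ at position $i$ if the reduction of $\epsilon_i\epsilon_{i+1}\cdots\epsilon_{i+r-1}$ equals $p_1\cdots p_r$. $\operatorname{Em}(p,\epsilon)$ is the set of all positions $i$ at which $p$ occurs in $\epsilon$, and $[n]=\{1,\dots,n\}$. *)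

theory Defs
  imports Main
begin

text \<open>Inversion sequences of length n, stored as lists with 0-based list index:
  the paper's epsilon_i is e ! (i - 1), and the condition 0 <= epsilon_i < i
  becomes e ! j < j + 1 for j < n.\<close>
definition inv_seqs :: "nat \<Rightarrow> nat list set" where
  "inv_seqs n = {e. length e = n \<and> (\<forall>j<n. e ! j < Suc j)}"

definition reduction :: "nat list \<Rightarrow> nat list" where
  "reduction w = map (\<lambda>x. card {y \<in> set w. y < x}) w"

definition Em :: "nat list \<Rightarrow> nat list \<Rightarrow> nat set" where
  "Em p e = {i. 1 \<le> i \<and> i + length p - 1 \<le> length e \<and>
                reduction (take (length p) (drop (i - 1) e)) = p}"

end

(*
  An occurrence of 0102 or of 0112 at position i needs e_i < e_(i+1) < e_(i+3); the two
  patterns differ only in whether e_(i+2) repeats e_i or e_(i+1).  For a prefix of an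
  inversion sequence, consider the multiset of pairs (Em 0102, Em 0112) over all its admissible
  continuations.  By induction on the number of remaining letters:
  (1) after a prefix ending in q r with q < r, this multiset does not depend on q;
  (2) after any two-letter prefix, it is invariant under swapping the two components.
  For (2), the continuations of q r (q < r) by the letter q and by the letter r differ exactly in
  which pattern occurs at the current position, and by (1) they have the same future.  Taking the empty prefix,
  the joint distribution of the two occurrence sets is symmetric.
*)

theory Submission
  imports Defs "HOL-Library.Multiset"
begin

lemma sum_eq_by_pair:
  fixes f g :: "'a \<Rightarrow> 'b::comm_monoid_add"
  assumes "finite A" "a \<in> A" "b \<in> A" "a \<noteq> b"
    and "\<And>x. x \<in> A \<Longrightarrow> x \<noteq> a \<Longrightarrow> x \<noteq> b \<Longrightarrow> f x = g x"
    and "f a + f b = g a + g b"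
  shows "sum f A = sum g A"
proof -
  have split: "sum h A = sum h (A - {a, b}) + (h a + h b)" for h :: "'a \<Rightarrow> 'b"
    using sum.subset_diff[of "{a, b}" A h] assms(1-4) by simp
  have "sum f (A - {a, b}) = sum g (A - {a, b})"
    using assms(5) by (intro sum.cong) auto
  with assms(6) show ?thesis
    by (simp only: split[of f] split[of g])
qed

lemma image_mset_sum: "image_mset f (\<Sum>x\<in>A. M x) = (\<Sum>x\<in>A. image_mset f (M x))"
  by (induction A rule: infinite_finite_induct) auto

lemma mset_set_UN_disjoint:
  assumes "finite I" "\<And>i. i \<in> I \<Longrightarrow> finite (A i)"
    and "\<And>i j. i \<in> I \<Longrightarrow> j \<in> I \<Longrightarrow> i \<noteq> j \<Longrightarrow> A i \<inter> A j = {}"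
  shows "mset_set (\<Union>i\<in>I. A i) = (\<Sum>i\<in>I. mset_set (A i))"
  using assms
proof (induction I rule: finite_induct)
  case (insert x F)
  then have "A x \<inter> (\<Union>i\<in>F. A i) = {}"
    by blast
  with insert show ?case
    by (simp add: mset_set_Union)
qed simp

lemma count_image_mset_mset_set:
  assumes "finite A"
  shows "count (image_mset f (mset_set A)) x = card {a \<in> A. f a = x}"
proof -
  have "count (image_mset f (mset_set A)) x = (\<Sum>a | a \<in> A \<and> x = f a. 1)"
    unfolding count_image_mset' using assms by (intro sum.cong) auto
  then show ?thesis
    by (simp add: eq_commute)
qed

lemma count_image_mset_swap: "count (image_mset prod.swap M) (x, y) = count M (y, x)"
proof -
  have "prod.swap -` {(x, y)} = {(y, x)}"
    by auto
  then show ?thesis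
    by (simp add: count_image_mset Int_insert_left not_in_iff)
qed

lemma reduction_nth:
  "i < length w \<Longrightarrow> reduction w ! i = card {y \<in> set w. y < w ! i}"
  by (simp add: reduction_def)

lemma reduction_nth_less_iff:
  assumes "i < length w" "j < length w"
  shows "reduction w ! i < reduction w ! j \<longleftrightarrow> w ! i < w ! j"
proof
  assume "w ! i < w ! j"
  moreover have "w ! i \<in> set w"
    using assms(1) by simp
  ultimately have "{y \<in> set w. y < w ! i} \<subset> {y \<in> set w. y < w ! j}"
    by (auto intro!: psubsetI)
  then show "reduction w ! i < reduction w ! j"
    using assms by (simp add: reduction_nth psubset_card_mono)
next
  assume less: "reduction w ! i < reduction w ! j"
  show "w ! i < w ! j"
  proof (rule ccontr)
    assume "\<not> w ! i < w ! j"
    then have "{y \<in> set w. y < w ! j} \<subseteq> {y \<in> set w. y < w ! i}"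
      by auto
    then have "card {y \<in> set w. y < w ! j} \<le> card {y \<in> set w. y < w ! i}"
      by (simp add: card_mono)
    with less assms show False
      by (simp add: reduction_nth)
  qed
qed

lemma reduction_0102_iff:
  "reduction [a, b, c, d] = [0, 1, 0, 2] \<longleftrightarrow> a < b \<and> b < d \<and> c = a"
proof
  assume r: "reduction [a, b, c, d] = [0, 1, 0, 2]"
  have "[a, b, c, d] ! i < [a, b, c, d] ! k \<longleftrightarrow> [0, 1, 0, 2::nat] ! i < [0, 1, 0, 2] ! k"
    if "i < 4" "k < 4" for i k
    using reduction_nth_less_iff[of i "[a, b, c, d]" k] that by (simp add: r)
  from this[of 0 1] this[of 1 3] this[of 0 2] this[of 2 0]
  show "a < b \<and> b < d \<and> c = a"
    by simp
next
  assume abcd: "a < b \<and> b < d \<and> c = a"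
  then have "{y \<in> {a, b, c, d}. y < a} = {}" "{y \<in> {a, b, c, d}. y < b} = {a}"
    "{y \<in> {a, b, c, d}. y < d} = {a, b}"
    by auto
  with abcd show "reduction [a, b, c, d] = [0, 1, 0, 2]"
    by (simp add: reduction_def)
qed

lemma reduction_0112_iff:
  "reduction [a, b, c, d] = [0, 1, 1, 2] \<longleftrightarrow> a < b \<and> b < d \<and> c = b"
proof
  assume r: "reduction [a, b, c, d] = [0, 1, 1, 2]"
  have "[a, b, c, d] ! i < [a, b, c, d] ! k \<longleftrightarrow> [0, 1, 1, 2::nat] ! i < [0, 1, 1, 2] ! k"
    if "i < 4" "k < 4" for i k
    using reduction_nth_less_iff[of i "[a, b, c, d]" k] that by (simp add: r)
  from this[of 0 1] this[of 1 3] this[of 1 2] this[of 2 1]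
  show "a < b \<and> b < d \<and> c = b"
    by simp
next
  assume abcd: "a < b \<and> b < d \<and> c = b"
  then have "{y \<in> {a, b, c, d}. y < a} = {}" "{y \<in> {a, b, c, d}. y < b} = {a}"
    "{y \<in> {a, b, c, d}. y < d} = {a, b}"
    by auto
  with abcd show "reduction [a, b, c, d] = [0, 1, 1, 2]"
    by (simp add: reduction_def)
qed

lemma Em_Cons:
  assumes "p \<noteq> []"
  shows "Em p (x # w) =
    (if length p \<le> Suc (length w) \<and> reduction (take (length p) (x # w)) = p
     then insert 1 else id) (Suc ` Em p w)"
proof (rule set_eqI)
  fix i
  have not0: "0 \<notin> Em p v" for v
    by (simp add: Em_def)
  consider "i = 0" | "i = 1" | k where "i = Suc k" "k \<noteq> 0"
    by (metis One_nat_def not0_implies_Suc)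
  then show "i \<in> Em p (x # w) \<longleftrightarrow> i \<in> (if length p \<le> Suc (length w) \<and>
      reduction (take (length p) (x # w)) = p then insert 1 else id) (Suc ` Em p w)"
  proof cases
    case 2
    with assms not0 show ?thesis
      by (auto simp: Em_def)
  next
    case (3 k)
    then have "Suc k \<in> Em p (x # w) \<longleftrightarrow> k \<in> Em p w"
      by (cases k) (simp_all add: Em_def)
    with 3 show ?thesis
      by auto
  qed (simp add: Em_def)
qed

lemma Em_short: "length w < length p \<Longrightarrow> Em p w = {}"
  by (auto simp: Em_def)

definition mark ::
    "nat \<Rightarrow> nat \<Rightarrow> nat \<Rightarrow> nat \<Rightarrow> nat \<Rightarrow> nat set \<times> nat set \<Rightarrow> nat set \<times> nat set" where
  "mark j a b c d = map_prod
     (if a < b \<and> b < d \<and> c = a then insert j else id)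
     (if a < b \<and> b < d \<and> c = b then insert j else id)"

lemma mark_eq_id: "\<not> (a < b \<and> b < d \<and> (c = a \<or> c = b)) \<Longrightarrow> mark j a b c d = id"
  by (auto simp: mark_def map_prod.id)

lemma swap_image_mset_mark:
  assumes "a < b" "b < d" "image_mset prod.swap M = M"
  shows "image_mset prod.swap (image_mset (mark j a b a d) M) = image_mset (mark j a b b d) M"
    and "image_mset prod.swap (image_mset (mark j a b b d) M) = image_mset (mark j a b a d) M"
proof -
  have "prod.swap \<circ> mark j a b a d = mark j a b b d \<circ> prod.swap"
    "prod.swap \<circ> mark j a b b d = mark j a b a d \<circ> prod.swap"
    using assms(1,2) by (auto simp: mark_def fun_eq_iff)
  then show "image_mset prod.swap (image_mset (mark j a b a d) M) = image_mset (mark j a b b d) M"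
    "image_mset prod.swap (image_mset (mark j a b b d) M) = image_mset (mark j a b a d) M"
    by (metis assms(3) multiset.map_comp)+
qed

fun occs :: "nat \<Rightarrow> nat list \<Rightarrow> nat set \<times> nat set" where
  "occs j (a # b # c # d # w) = mark j a b c d (occs (Suc j) (b # c # d # w))"
| "occs _ _ = ({}, {})"

lemma occs_eq_Em: "occs (Suc j) w = ((+) j ` Em [0, 1, 0, 2] w, (+) j ` Em [0, 1, 1, 2] w)"
proof (induction j w rule: occs.induct)
  case (1 j a b c d w)
  have Em_step: "Em p (a # b # c # d # w) =
      (if reduction [a, b, c, d] = p then insert 1 else id) (Suc ` Em p (b # c # d # w))"
    if "length p = 4" for p
  proof -
    from that have "p \<noteq> []"
      by auto
    with Em_Cons[of p a "b # c # d # w"] that show ?thesis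
      by (simp add: numeral_eq_Suc)
  qed
  from 1 show ?case
    using Em_step[of "[0, 1, 0, 2]", unfolded reduction_0102_iff]
      Em_step[of "[0, 1, 1, 2]", unfolded reduction_0112_iff]
    by (simp add: mark_def image_image)
qed (simp_all add: Em_short)

lemma occs_short: "length w < 4 \<Longrightarrow> occs j w = ({}, {})"
  by (cases "(j, w)" rule: occs.cases) auto

text \<open>Words that can fill the (1-based) positions i, ..., i + m - 1 of an inversion sequence.\<close>

definition inv_seqs_from :: "nat \<Rightarrow> nat \<Rightarrow> nat list set" where
  "inv_seqs_from i m = {s. length s = m \<and> (\<forall>k<m. s ! k < i + k)}"

lemma inv_seqs_eq_from: "inv_seqs n = inv_seqs_from 1 n"
  by (simp add: inv_seqs_def inv_seqs_from_def)

lemma finite_inv_seqs_from: "finite (inv_seqs_from i m)"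
proof (rule finite_subset)
  have "x < i + m" if "s \<in> inv_seqs_from i m" "x \<in> set s" for s x
  proof -
    from that obtain k where "k < m" "x = s ! k" "s ! k < i + k"
      by (auto simp: inv_seqs_from_def in_set_conv_nth)
    then show ?thesis
      by simp
  qed
  then show "inv_seqs_from i m \<subseteq> {s. set s \<subseteq> {..<i + m} \<and> length s = m}"
    by (auto simp: inv_seqs_from_def)
qed (simp add: finite_lists_length_eq)

lemma Cons_in_inv_seqs_from:
  "u # s \<in> inv_seqs_from i (Suc m) \<longleftrightarrow> u < i \<and> s \<in> inv_seqs_from (Suc i) m"
  by (auto simp: inv_seqs_from_def All_less_Suc2)

lemma inv_seqs_from_Suc: "inv_seqs_from i (Suc m) = (\<Union>u<i. (#) u ` inv_seqs_from (Suc i) m)"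
proof (intro set_eqI iffI)
  fix s
  assume s: "s \<in> inv_seqs_from i (Suc m)"
  then obtain u s' where "s = u # s'"
    by (cases s) (auto simp: inv_seqs_from_def)
  with s show "s \<in> (\<Union>u<i. (#) u ` inv_seqs_from (Suc i) m)"
    by (auto simp: Cons_in_inv_seqs_from)
qed (auto simp: Cons_in_inv_seqs_from)

text \<open>The joint distribution of the occurrence sets over all admissible continuations, by m
  letters, of the word w placed at position j.\<close>

definition profile :: "nat \<Rightarrow> nat list \<Rightarrow> nat \<Rightarrow> (nat set \<times> nat set) multiset" where
  "profile j w m = image_mset (\<lambda>s. occs j (w @ s)) (mset_set (inv_seqs_from (j + length w) m))"

lemma profile_short:
  assumes "length w + m < 4"
  shows "profile j w m = image_mset (\<lambda>_. ({}, {})) (mset_set (inv_seqs_from (j + length w) m))"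
  unfolding profile_def
proof (rule image_mset_cong)
  fix s
  assume "s \<in># mset_set (inv_seqs_from (j + length w) m)"
  then have "length s = m"
    by (simp add: finite_inv_seqs_from) (simp add: inv_seqs_from_def)
  with assms show "occs j (w @ s) = ({}, {})"
    by (simp add: occs_short)
qed

lemma profile_Suc: "profile j w (Suc m) = (\<Sum>u < j + length w. profile j (w @ [u]) m)"
proof -
  have "mset_set (inv_seqs_from (j + length w) (Suc m)) =
      (\<Sum>u < j + length w. image_mset ((#) u) (mset_set (inv_seqs_from (Suc (j + length w)) m)))"
    unfolding inv_seqs_from_Suc
    by (subst mset_set_UN_disjoint) (auto simp: finite_inv_seqs_from image_mset_mset_set)
  then show ?thesis
    by (simp add: profile_def image_mset_sum multiset.map_comp comp_def)
qed

lemma profile_mark: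
  "profile j (a # b # c # d # w) m = image_mset (mark j a b c d) (profile (Suc j) (b # c # d # w) m)"
  by (simp add: profile_def multiset.map_comp comp_def)

lemma profile_Suc_mark:
  "profile j [a, b, c] (Suc m) =
    (\<Sum>d < j + 3. image_mset (mark j a b c d) (profile (Suc j) [b, c, d] m))"
  by (simp add: profile_Suc profile_mark numeral_3_eq_3 del: sum.lessThan_Suc)

lemma profile_skip:
  assumes "\<not> (a < b \<and> (c = a \<or> c = b))"
  shows "profile j (a # b # c # w) m = profile (Suc j) (b # c # w) m"
proof -
  have "occs j (a # b # c # v) = occs (Suc j) (b # c # v)" for v
    using assms by (cases v) (simp_all add: mark_eq_id)
  then show ?thesis
    by (simp add: profile_def)
qed

lemma profile_cong_first:
  assumes "\<And>d. mark j a b c d = mark j a' b c d"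
  shows "profile j [a, b, c] m = profile j [a', b, c] m"
proof -
  have "occs j (a # b # c # v) = occs j (a' # b # c # v)" for v
    using assms by (cases v) simp_all
  then show ?thesis
    by (simp add: profile_def)
qed

lemma profile_indep_pair_step:
  assumes "q < r" "q' < r" "q \<noteq> q'"
    and IH: "\<And>d. r < d \<Longrightarrow> d < j + 3 \<Longrightarrow>
      profile (Suc (Suc j)) [q, d] m = profile (Suc (Suc j)) [q', d] m"
  shows "profile j [q, r, q] (Suc m) + profile j [q, r, q'] (Suc m) =
    profile j [q', r, q'] (Suc m) + profile j [q', r, q] (Suc m)"
proof -
  have "image_mset (mark j q r q d) (profile (Suc j) [r, q, d] m) +
        image_mset (mark j q r q' d) (profile (Suc j) [r, q', d] m) =
      image_mset (mark j q' r q' d) (profile (Suc j) [r, q', d] m) +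
        image_mset (mark j q' r q d) (profile (Suc j) [r, q, d] m)"
    if "d < j + 3" for d
  proof (cases "r < d")
    case True
    have "profile (Suc j) [r, q, d] m = profile (Suc j) [r, q', d] m"
      using assms(1,2) IH[OF True that] by (simp add: profile_skip)
    moreover have "mark j q r q d = mark j q' r q' d"
      using assms(1,2) True by (simp add: mark_def)
    ultimately show ?thesis
      using assms by (simp add: mark_eq_id)
  next
    case False
    then show ?thesis
      by (simp add: mark_eq_id add.commute)
  qed
  then show ?thesis
    unfolding profile_Suc_mark sum.distrib[symmetric] by (intro sum.cong) auto
qed

lemma profile_indep_first:
  assumes "q < r" "q' < r" "r \<le> j"
  shows "profile j [q, r] m = profile j [q', r] m"
  using assms
proof (induction m arbitrary: j q q' r rule: less_induct)
  case (less m)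
  consider "m < 2" | "q = q'" | k where "m = Suc (Suc k)" "q \<noteq> q'"
    by (cases "q = q'"; cases m; cases "m - 1") auto
  then show ?case
  proof cases
    case (3 k)
    have "profile (Suc (Suc j)) [q, d] k = profile (Suc (Suc j)) [q', d] k"
      if "r < d" "d < j + 3" for d
      using that less.prems 3 by (intro less.IH) auto
    with less.prems 3 have pair: "profile j [q, r, q] (Suc k) + profile j [q, r, q'] (Suc k) =
        profile j [q', r, q'] (Suc k) + profile j [q', r, q] (Suc k)"
      by (intro profile_indep_pair_step) auto
    have "profile j [q, r, c] (Suc k) = profile j [q', r, c] (Suc k)" if "c \<noteq> q" "c \<noteq> q'" for c
      using that less.prems by (intro profile_cong_first) (auto simp: mark_def)
    with pair less.prems 3 have "(\<Sum>c < j + 2. profile j [q, r, c] (Suc k)) =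
        (\<Sum>c < j + 2. profile j [q', r, c] (Suc k))"
      by (intro sum_eq_by_pair[of _ q q']) auto
    with 3 show ?thesis
      by (simp add: profile_Suc[of j "[_, r]"] numeral_2_eq_2 del: sum.lessThan_Suc)
  qed (auto simp: profile_short)
qed

lemma swap_profile_pair_step:
  assumes "q < r"
    and IH: "\<And>x d. x \<le> r \<Longrightarrow> d < j + 3 \<Longrightarrow>
      image_mset prod.swap (profile (Suc (Suc j)) [x, d] m) = profile (Suc (Suc j)) [x, d] m"
  shows "image_mset prod.swap (profile j [q, r, q] (Suc m) + profile j [q, r, r] (Suc m)) =
    profile j [q, r, q] (Suc m) + profile j [q, r, r] (Suc m)"
proof -
  have "image_mset prod.swap (image_mset (mark j q r q d) (profile (Suc j) [r, q, d] m) +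
        image_mset (mark j q r r d) (profile (Suc j) [r, r, d] m)) =
      image_mset (mark j q r q d) (profile (Suc j) [r, q, d] m) +
        image_mset (mark j q r r d) (profile (Suc j) [r, r, d] m)"
    if "d < j + 3" for d
  proof -
    have skip: "profile (Suc j) [r, x, d] m = profile (Suc (Suc j)) [x, d] m" if "x \<le> r" for x
      using that by (simp add: profile_skip)
    show ?thesis
    proof (cases "r < d")
      case True
      have "profile (Suc (Suc j)) [q, d] m = profile (Suc (Suc j)) [r, d] m"
        using assms(1) True that by (intro profile_indep_first) auto
      with skip[of q] skip[of r] assms(1) IH[of r d] True that show ?thesis
        by (simp add: swap_image_mset_mark add.commute)
    next
      case False
      with skip[of q] skip[of r] assms(1) IH[of q d] IH[of r d] that show ?thesis
        by (simp add: mark_eq_id)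
    qed
  qed
  then show ?thesis
    unfolding profile_Suc_mark sum.distrib[symmetric] image_mset_sum by (intro sum.cong) auto
qed

lemma swap_profile:
  assumes "r \<le> j"
  shows "image_mset prod.swap (profile j [q, r] m) = profile j [q, r] m"
  using assms
proof (induction m arbitrary: j q r rule: less_induct)
  case (less m)
  consider "m < 2" | k where "m = Suc (Suc k)"
    by (cases m; cases "m - 1") auto
  then show ?case
  proof cases
    case 1
    then show ?thesis
      by (simp add: profile_short multiset.map_comp comp_def)
  next
    case (2 k)
    have skip: "image_mset prod.swap (profile j [q, r, c] (Suc k)) = profile j [q, r, c] (Suc k)"
      if "c < j + 2" "\<not> (q < r \<and> (c = q \<or> c = r))" for c
      using that less.prems 2 by (simp add: profile_skip less.IH)
    have "(\<Sum>c < j + 2. image_mset prod.swap (profile j [q, r, c] (Suc k))) =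
        (\<Sum>c < j + 2. profile j [q, r, c] (Suc k))"
    proof (cases "q < r")
      case True
      with less.prems 2 have
        "image_mset prod.swap (profile j [q, r, q] (Suc k) + profile j [q, r, r] (Suc k)) =
          profile j [q, r, q] (Suc k) + profile j [q, r, r] (Suc k)"
        by (intro swap_profile_pair_step less.IH) auto
      with True less.prems skip show ?thesis
        by (intro sum_eq_by_pair[of _ q r]) auto
    next
      case False
      with skip show ?thesis
        by (intro sum.cong) auto
    qed
    with 2 show ?thesis
      by (simp add: profile_Suc[of j "[q, r]"] image_mset_sum numeral_2_eq_2 del: sum.lessThan_Suc)
  qed
qed

lemma swap_profile_Nil: "image_mset prod.swap (profile 1 [] n) = profile 1 [] n"
proof (cases "n < 2")
  case True
  then show ?thesis
    by (simp add: profile_short multiset.map_comp comp_def)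
next
  case False
  then obtain m where "n = Suc (Suc m)"
    by (cases n; cases "n - 1") auto
  then have "profile 1 [] n = profile 1 [0, 0] m + profile 1 [0, 1] m"
    by (simp add: profile_Suc numeral_2_eq_2)
  then show ?thesis
    by (simp add: swap_profile)
qed

lemma card_eq_count_profile:
  "card {e \<in> inv_seqs n. Em [0, 1, 0, 2] e = S \<and> Em [0, 1, 1, 2] e = T} =
    count (profile 1 [] n) (S, T)"
proof -
  have "occs 1 e = (Em [0, 1, 0, 2] e, Em [0, 1, 1, 2] e)" for e
    using occs_eq_Em[of 0 e] by simp
  then show ?thesis
    by (simp add: profile_def count_image_mset_mset_set finite_inv_seqs_from inv_seqs_eq_from)
qed

theorem mainTheorem1:
  fixes n :: nat and S T :: "nat set"
  assumes "n \<ge> 1" and "S \<subseteq> {1..n}" and "T \<subseteq> {1..n}"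
  shows "card {e \<in> inv_seqs n. Em [0,1,0,2] e = S \<and> Em [0,1,1,2] e = T}
       = card {e \<in> inv_seqs n. Em [0,1,0,2] e = T \<and> Em [0,1,1,2] e = S}"
  \<comment> \<open>The identity holds for every n, S and T.\<close>
proof -
  have "count (profile 1 [] n) (S, T) = count (image_mset prod.swap (profile 1 [] n)) (S, T)"
    by (simp only: swap_profile_Nil)
  also have "\<dots> = count (profile 1 [] n) (T, S)"
    by (rule count_image_mset_swap)
  finally show ?thesis
    unfolding card_eq_count_profile .
qed

end
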